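(* Consider an instance of the Steiner Team Orienteering Problem and the linear program $\mathcal{L}_2$ as described in the context. Let $(\bar{x},\bar{y},\bar{f},\bar{\varphi})$ be a feasible solution of $\mathcal{L}_2$ and let $\tau=\sum_{i\in P}p_i\bar{y}_i$. Let $C\subseteq P$ be a cover for the knapsack inequality $\sum_{i\in P}p_iy_i\le\lfloor\tau\rfloor$, i.e. $\sum_{i\in C}p_i>\lfloor\tau\rfloor$, such that $\bar{y}_i>0$ for all $i\in C$. Then there exists $i\in C$ with $0<\bar{y}_i<1$.
   Context: An instance of the Steiner Team Orienteering Problem (STOP) consists of: a digraph $G=(N,A)$; an origin $s\in N$ and a destination $t\in N$ with $s\neq t$; disjoint sets $S,P\subseteq N\setminus\{s,t\}$ (mandatory and profitable vertices) with $N=S\cup P\cup\{s,t\}$; rewards $p_i\in\mathbb{Z}^+$ for $i\in P$; traverse times $d_{ij}\in\mathbb{R}^+$ for $(i,j)\in A$; a number $m$ of vehicles and a time limit $T$. For $i\in N$ let $\delta^+(i)=\{j\in N:(i,j)\in A\}$ and $\delta^-(i)=\{j\in N:(j,i)\in A\}$. For $i,j\in N$, $R_{ij}$ denotes the minimum of $\sum_{a\in A_p}d_a$ over all paths $p$ from $i$ to $j$ in $G$ (with arc set $A_p$), and $R_{ii}=0$. $\mathcal{L}_2$ is the linear program: maximize $\sum_{i\in P}p_iy_i$ over $x\in\mathbb{R}^A$, $y\in\mathbb{R}^N$, $f\in\mathbb{R}^A$, $\varphi\in\mathbb{R}$ subject to: $y_i=1$ for all $i\in S\cup\{s,t\}$;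 $\sum_{j\in\delta^+(i)}x_{ij}=y_i$ for all $i\in S\cup P$; $\sum_{j\in\delta^+(s)}x_{sj}=\sum_{i\in\delta^-(t)}x_{it}=m-\varphi$; $\sum_{i\in\delta^-(s)}x_{is}=\sum_{j\in\delta^+(t)}x_{tj}=0$; $\sum_{j\in\delta^+(i)}x_{ij}-\sum_{j\in\delta^-(i)}x_{ji}=0$ for all $i\in S\cup P$; $f_{sj}=(T-d_{sj})x_{sj}$ for all $j\in\delta^+(s)$; $\sum_{j\in\delta^-(i)}f_{ji}-\sum_{j\in\delta^+(i)}f_{ij}=\sum_{j\in\delta^+(i)}d_{ij}x_{ij}$ for all $i\in S\cup P$; $f_{ij}\le(T-R_{si}-d_{ij})x_{ij}$ for all $(i,j)\in A$ with $i\neq s$; $f_{ij}\ge R_{jt}x_{ij}$ for all $(i,j)\in A$; $0\le x\le1$, $0\le y\le 1$, $f\ge0$, $0\le\varphi\le m$. *)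

theory Defs
  imports Complex_Main
begin

text \<open>Steiner Team Orienteering Problem (STOP) instance data:
  vertex set N, arc set A, origin s, destination t, mandatory vertices S,
  profitable vertices P, rewards p, traverse times d, number of vehicles m,
  time limit T.\<close>

definition stop_instance ::
  "'a set \<Rightarrow> ('a \<times> 'a) set \<Rightarrow> 'a \<Rightarrow> 'a \<Rightarrow> 'a set \<Rightarrow> 'a set
   \<Rightarrow> ('a \<Rightarrow> int) \<Rightarrow> ('a \<times> 'a \<Rightarrow> real) \<Rightarrow> nat \<Rightarrow> real \<Rightarrow> bool" where
  "stop_instance N A s t S P p d m T \<longleftrightarrow>
     finite N \<and> A \<subseteq> N \<times> N \<and> s \<in> N \<and> t \<in> N \<and> s \<noteq> t \<and>
     S \<subseteq> N - {s, t} \<and> P \<subseteq> N - {s, t} \<and> S \<inter> P = {} \<and>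
     N = S \<union> P \<union> {s, t} \<and>
     (\<forall>i\<in>P. p i > 0) \<and> (\<forall>a\<in>A. d a > 0)"

definition out_nbrs :: "'a set \<Rightarrow> ('a \<times> 'a) set \<Rightarrow> 'a \<Rightarrow> 'a set" where
  "out_nbrs N A i = {j \<in> N. (i, j) \<in> A}"

definition in_nbrs :: "'a set \<Rightarrow> ('a \<times> 'a) set \<Rightarrow> 'a \<Rightarrow> 'a set" where
  "in_nbrs N A i = {j \<in> N. (j, i) \<in> A}"

definition is_path :: "('a \<times> 'a) set \<Rightarrow> 'a \<Rightarrow> 'a \<Rightarrow> 'a list \<Rightarrow> bool" where
  "is_path A i j vs \<longleftrightarrow> vs \<noteq> [] \<and> hd vs = i \<and> last vs = j \<and> distinct vs \<and>
     (\<forall>e \<in> set (zip vs (tl vs)). e \<in> A)"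

definition path_cost :: "('a \<times> 'a \<Rightarrow> real) \<Rightarrow> 'a list \<Rightarrow> real" where
  "path_cost d vs = sum_list (map d (zip vs (tl vs)))"

definition Rdist :: "('a \<times> 'a) set \<Rightarrow> ('a \<times> 'a \<Rightarrow> real) \<Rightarrow> 'a \<Rightarrow> 'a \<Rightarrow> real" where
  "Rdist A d i j = (if i = j then 0 else Inf {path_cost d vs | vs. is_path A i j vs})"

definition L2_feasible ::
  "'a set \<Rightarrow> ('a \<times> 'a) set \<Rightarrow> 'a \<Rightarrow> 'a \<Rightarrow> 'a set \<Rightarrow> 'a set
   \<Rightarrow> ('a \<times> 'a \<Rightarrow> real) \<Rightarrow> nat \<Rightarrow> real
   \<Rightarrow> ('a \<times> 'a \<Rightarrow> real) \<Rightarrow> ('a \<Rightarrow> real) \<Rightarrow> ('a \<times> 'a \<Rightarrow> real) \<Rightarrow> real \<Rightarrow> bool" where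
  "L2_feasible N A s t S P d m T x y f \<phi> \<longleftrightarrow>
     (\<forall>i \<in> S \<union> {s, t}. y i = 1) \<and>
     (\<forall>i \<in> S \<union> P. (\<Sum>j\<in>out_nbrs N A i. x (i, j)) = y i) \<and>
     (\<Sum>j\<in>out_nbrs N A s. x (s, j)) = real m - \<phi> \<and>
     (\<Sum>i\<in>in_nbrs N A t. x (i, t)) = real m - \<phi> \<and>
     (\<Sum>i\<in>in_nbrs N A s. x (i, s)) = 0 \<and>
     (\<Sum>j\<in>out_nbrs N A t. x (t, j)) = 0 \<and>
     (\<forall>i \<in> S \<union> P. (\<Sum>j\<in>out_nbrs N A i. x (i, j)) - (\<Sum>j\<in>in_nbrs N A i. x (j, i)) = 0) \<and>
     (\<forall>j \<in> out_nbrs N A s. f (s, j) = (T - d (s, j)) * x (s, j)) \<and>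
     (\<forall>i \<in> S \<union> P. (\<Sum>j\<in>in_nbrs N A i. f (j, i)) - (\<Sum>j\<in>out_nbrs N A i. f (i, j))
                    = (\<Sum>j\<in>out_nbrs N A i. d (i, j) * x (i, j))) \<and>
     (\<forall>(i, j) \<in> A. i \<noteq> s \<longrightarrow> f (i, j) \<le> (T - Rdist A d s i - d (i, j)) * x (i, j)) \<and>
     (\<forall>(i, j) \<in> A. f (i, j) \<ge> Rdist A d j t * x (i, j)) \<and>
     (\<forall>a \<in> A. 0 \<le> x a \<and> x a \<le> 1) \<and>
     (\<forall>i \<in> N. 0 \<le> y i \<and> y i \<le> 1) \<and>
     (\<forall>a \<in> A. 0 \<le> f a) \<and>
     0 \<le> \<phi> \<and> \<phi> \<le> real m"

end

theory Submission
  imports Defs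
begin

text \<open>If every \<open>y\<^sub>i\<close>, \<open>i \<in> C\<close>, were integral, the positivity assumption forces
  \<open>y\<^sub>i = 1\<close> on \<open>C\<close>, so the integer \<open>p(C)\<close> is at most \<open>\<tau>\<close> and hence at most \<open>\<lfloor>\<tau>\<rfloor>\<close>,
  contradicting the cover property.\<close>

lemma int_sum_le_floor_weighted_sum:
  fixes p :: "'a \<Rightarrow> int" and y :: "'a \<Rightarrow> real"
  assumes "finite P" and "C \<subseteq> P"
    and "\<forall>i\<in>P. 0 \<le> p i" and "\<forall>i\<in>P. 0 \<le> y i" and "\<forall>i\<in>C. y i = 1"
  shows "(\<Sum>i\<in>C. p i) \<le> \<lfloor>\<Sum>i\<in>P. real_of_int (p i) * y i\<rfloor>"
proof -
  have "real_of_int (\<Sum>i\<in>C. p i) = (\<Sum>i\<in>C. real_of_int (p i) * y i)"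
    using assms(5) by simp
  also have "\<dots> \<le> (\<Sum>i\<in>P. real_of_int (p i) * y i)"
    using assms by (intro sum_mono2) auto
  finally show ?thesis
    by (simp add: le_floor_iff)
qed

lemma knapsack_cover_has_fractional_entry:
  fixes p :: "'a \<Rightarrow> int" and y :: "'a \<Rightarrow> real"
  assumes "finite P" and "C \<subseteq> P"
    and "\<forall>i\<in>P. 0 \<le> p i" and "\<forall>i\<in>P. 0 \<le> y i \<and> y i \<le> 1"
    and cover: "(\<Sum>i\<in>C. p i) > \<lfloor>\<Sum>i\<in>P. real_of_int (p i) * y i\<rfloor>"
    and "\<forall>i\<in>C. y i > 0"
  shows "\<exists>i\<in>C. 0 < y i \<and> y i < 1"
proof (rule ccontr)
  assume "\<not> (\<exists>i\<in>C. 0 < y i \<and> y i < 1)"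
  with assms(2,4,6) have "\<forall>i\<in>C. y i = 1"
    by force
  with assms(1-4) have "(\<Sum>i\<in>C. p i) \<le> \<lfloor>\<Sum>i\<in>P. real_of_int (p i) * y i\<rfloor>"
    by (intro int_sum_le_floor_weighted_sum) auto
  with cover show False
    by simp
qed

theorem proposition3:
  fixes N :: "'a set" and A :: "('a \<times> 'a) set" and s t :: 'a and S P C :: "'a set"
    and p :: "'a \<Rightarrow> int" and d :: "'a \<times> 'a \<Rightarrow> real" and m :: nat and T :: real
    and x :: "'a \<times> 'a \<Rightarrow> real" and y :: "'a \<Rightarrow> real" and f :: "'a \<times> 'a \<Rightarrow> real"
    and \<phi> :: real
  assumes inst: "stop_instance N A s t S P p d m T"
    and feas: "L2_feasible N A s t S P d m T x y f \<phi>"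
    and CP: "C \<subseteq> P"
    and cover: "(\<Sum>i\<in>C. p i) > \<lfloor>\<Sum>i\<in>P. real_of_int (p i) * y i\<rfloor>"
    and pos: "\<forall>i\<in>C. y i > 0"
  shows "\<exists>i\<in>C. 0 < y i \<and> y i < 1"
proof -
  have "finite N" and "P \<subseteq> N" and "\<forall>i\<in>P. 0 \<le> p i"
    using inst unfolding stop_instance_def by (auto simp: less_imp_le)
  moreover have "\<forall>i\<in>N. 0 \<le> y i \<and> y i \<le> 1"
    using feas unfolding L2_feasible_def by blast
  ultimately show ?thesis
    using CP cover pos
    by (intro knapsack_cover_has_fractional_entry) (auto intro: finite_subset)
qed

end
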